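(* Fix $\theta \in (0,\pi)$. For $n \in \mathbb{N}$ let $M_n(\theta)$ denote the real symmetric tridiagonal $2n \times 2n$ matrix whose diagonal entries are $(1+\cos\theta, 0, 0, \dots, 0, -(1+\cos\theta))$ (i.e. the $(1,1)$ entry is $1+\cos\theta$, the $(2n,2n)$ entry is $-(1+\cos\theta)$, and all other diagonal entries are $0$), and whose sub- and super-diagonal entries are all equal to $\sin\theta$. Define $f_n:\mathbb{R}\setminus\{\frac{k}{n+1}\pi \mid k\in\mathbb{Z}\}\to\mathbb{R}$ by $f_n(\phi)=\dfrac{\sin((n-1)\phi)}{\sin((n+1)\phi)}$; for $k \in [0,n]\cap\mathbb{Z}$ let $I_{n,k}=\left(\frac{k}{n+1}\pi,\frac{k+1}{n+1}\pi\right)$; and let $Z_n=\{\phi\in\mathbb{R} \mid (1+\cos\theta)^2\sin((n-1)\phi)=\sin^2(\theta)\sin((n+1)\phi)\}$. For a set $I\subset\mathbb{R}$ write $2\sin\theta\cos(I)=\{2\sin\theta\cos\phi \mid \phi\in I\}$, and let $\sigma(M)$ denote the set of eigenvalues of a matrix $M$. Then: (i) For every $n\in\mathbb{N}$ and every $\phi\in[0,\pi]$ (at which $f_{2n}$ is defined), $f_{2n}(\phi)=f_{2n}(\pi-\phi)=f_{2n}(\pi+\phi)$. (ii) For all sufficiently large $n$, $f_{2n}$ is monotone on each of the intervals $\left(0,\frac{\pi}{2(2n+1)}\right)$ and $\left(\pi-\frac{\pi}{2(2n+1)},\pi\right)$. (iii) For all sufficiently large $n$ and every $k\in([1,2n-1]\cap\mathbb{N})\setminus\{n\}$,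 $f_{2n}$ is monotone on each of $\left[\frac{\pi}{2(2n+1)},\frac{\pi}{2n+1}\right)$, $I_{2n,k}$, and $\left(\frac{2n\pi}{2n+1},\pi-\frac{\pi}{2(2n+1)}\right]$. (iv) If $\theta\neq\frac{\pi}{2}$, then for all sufficiently large $n$: $\#(Z_{2n}\cap I_{2n,0})\le 3$, $\#(Z_{2n}\cap I_{2n,2n})\le 3$, $Z_{2n}\cap I_{2n,n}=\emptyset$, $\{0,\pi\}\subset Z_{2n}$, and $\#(Z_{2n}\cap I_{2n,k})=1$ for every $k\in([1,2n-1]\cap\mathbb{N})\setminus\{n\}$. (v) If $\theta=\frac{\pi}{2}$, then $Z_{2n}\cap[0,\pi]\subset\{0,\pi\}\cup\left\{\frac{1}{4n}\pi,\frac{3}{4n}\pi,\dots,\frac{4n-1}{4n}\pi\right\}$. (vi) If $\theta\neq\frac{\pi}{2}$, then for all sufficiently large $n$: $\#(\sigma(M_n(\theta))\cap 2\sin\theta\cos(I_{2n,0}))\le 3$, $\#(\sigma(M_n(\theta))\cap 2\sin\theta\cos(I_{2n,2n}))\le 3$, $\sigma(M_n(\theta))\cap 2\sin\theta\cos(I_{2n,n})=\emptyset$, and $\#(\sigma(M_n(\theta))\cap 2\sin\theta\cos(I_{2n,k}))\le 1$ for every $k\in([1,2n-1]\cap\mathbb{N})\setminus\{n\}$. (vii) If $\theta=\frac{\pi}{2}$, then for every $n\in\mathbb{N}$, $\sigma(M_n(\theta))\subset\{-2,2\}\cup\left\{2\cos\left(\frac{2k-1}{4n}\pi\right) \mid k=1,2,\dots,2n\right\}$.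 (viii) Let $\varepsilon>0$, $\lambda_0\in(-2\sin\theta,2\sin\theta)$ and $\eta>0$ with $|\lambda_0|+\eta<2\sin\theta$. Then there exists $n_0\in\mathbb{N}$ such that for every $n\ge n_0$, every eigenvalue $\lambda$ of $M_n(\theta)$ with $\lambda\in(\lambda_0-\eta,\lambda_0+\eta)$, and every unit eigenvector $u=(u_1,\dots,u_{2n})\in\mathbb{C}^{2n}$ of $M_n(\theta)$ corresponding to $\lambda$, one has $|u_{2n}|<\varepsilon$.
   Context: In the paper, $M_n(\theta)$ is denoted $A_n(\theta)+B_n(\theta)$; it is the sum of the two reflections $A_n(\theta)=2P_n(\theta)-\mathrm{id}$, $B_n(\theta)=2Q_n(\theta)-\mathrm{id}$ of a $2n$-dimensional truncation of a constant-angle pair of orthogonal projections, and equals the explicit tridiagonal matrix described in the claim. $\#S$ denotes the cardinality of a set $S$. *)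

theory Defs
  imports Complex_Main "Jordan_Normal_Form.Char_Poly"
begin

definition Mmat :: "real \<Rightarrow> nat \<Rightarrow> real mat" where
  "Mmat \<theta> n = mat (2*n) (2*n) (\<lambda>(i,j).
     if i = j then (if i = 0 then 1 + cos \<theta>
                    else if i = 2*n - 1 then - (1 + cos \<theta>) else 0)
     else if i = j + 1 \<or> j = i + 1 then sin \<theta> else 0)"

text \<open>Spectrum: set of eigenvalues (real symmetric matrix, so all eigenvalues are real).\<close>
definition spec :: "real mat \<Rightarrow> real set" where
  "spec M = {x. eigenvalue M x}"

definition fdom :: "nat \<Rightarrow> real set" where
  "fdom n = UNIV - {real_of_int k / (real n + 1) * pi | k. True}"

definition fn :: "nat \<Rightarrow> real \<Rightarrow> real" where
  "fn n \<phi> = sin ((real n - 1) * \<phi>) / sin ((real n + 1) * \<phi>)"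

definition Iint :: "nat \<Rightarrow> nat \<Rightarrow> real set" where
  "Iint n k = {real k / (real n + 1) * pi <..< (real k + 1) / (real n + 1) * pi}"

definition Zset :: "real \<Rightarrow> nat \<Rightarrow> real set" where
  "Zset \<theta> n = {\<phi>. (1 + cos \<theta>)^2 * sin ((real n - 1) * \<phi>) = (sin \<theta>)^2 * sin ((real n + 1) * \<phi>)}"

definition cosimg :: "real \<Rightarrow> real set \<Rightarrow> real set" where
  "cosimg \<theta> I = (\<lambda>\<phi>. 2 * sin \<theta> * cos \<phi>) ` I"

definition monot_on :: "real set \<Rightarrow> (real \<Rightarrow> real) \<Rightarrow> bool" where
  "monot_on S f \<longleftrightarrow> mono_on S f \<or> antimono_on S f"

end

theory Submission
  imports Defs
begin

(* An eigenvector v of M_n(theta) with eigenvalue 2 sin(theta) cos(phi), sin(phi) <> 0, satisfies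
   the three-term recurrence sin(theta) (v_(j-1) + v_(j+1)) = 2 sin(theta) cos(phi) v_j in its
   interior rows. Started from the first row it is proportional to
   w_j = sin(theta) sin((j+1) phi) - (1 + cos(theta)) sin(j phi), and the last row then holds exactly
   when phi lies in Z_2n. So every eigenvalue in 2 sin(theta) cos(I) comes from a point of Z_2n in I.

   The derivative of f_N has the sign of N sin(2 phi) - sin(2 N phi), which is positive on (0, pi/2)
   and negative on (pi/2, pi) because |sin(N x)| < N |sin x|. Hence f_2n is strictly monotone on each
   I_(2n,k) with k <> n. Away from the poles Z_N is the level set f_N = sin(theta)^2 / (1 + cos(theta))^2,
   so each such interval meets Z_2n at most once; the intermediate value theorem provides a point
   for 1 <= k <= 2n - 1, and on I_(2n,n) the two sines in the equation of Z_2n have opposite signs.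

   For (viii) put c = lambda / (2 sin(theta)). The quadratic form |a|^2 - 2 c Re(a conj b) + |b|^2
   of consecutive entries is conserved by the recurrence and lies between (1 -+ |c|)(|a|^2 + |b|^2).
   Hence all 2n - 1 consecutive pairs carry comparable weight, and the last entry has weight
   O(1/n) uniformly for |c| bounded away from 1. *)

section \<open>Eigenvectors of the tridiagonal matrix\<close>

lemma tridiagonal_mult_vec_nth:
  fixes f :: "nat \<times> nat \<Rightarrow> 'a::comm_ring_1"
  assumes v: "v \<in> carrier_vec N" and i: "i < N"
    and off_band: "\<And>j. j < N \<Longrightarrow> j \<noteq> i \<Longrightarrow> j + 1 \<noteq> i \<Longrightarrow> j \<noteq> i + 1 \<Longrightarrow> f (i,j) = 0"
  shows "(mat N N f *\<^sub>v v) $ i = f (i,i) * v $ i + (if 0 < i then f (i,i-1) * v $ (i-1) else 0)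
           + (if i + 1 < N then f (i,i+1) * v $ (i+1) else 0)"
proof -
  let ?g = "\<lambda>j. f (i,j) * v $ j"
  have "(mat N N f *\<^sub>v v) $ i = (\<Sum>j\<in>{0..<N}. ?g j)"
    using v i by (simp add: scalar_prod_def)
  also have "\<dots> = (\<Sum>j\<in>{0..<N} \<inter> {i-1, i, i+1}. ?g j)"
  proof (rule sum.mono_neutral_right)
    show "\<forall>j\<in>{0..<N} - {0..<N} \<inter> {i-1, i, i+1}. ?g j = 0"
      using off_band by force
  qed auto
  also have "\<dots> = ?g i + (if 0 < i then ?g (i-1) else 0) + (if i + 1 < N then ?g (i+1) else 0)"
    using i by (cases "0 < i"; cases "i + 1 < N") (auto simp: insert_commute Int_insert_right)
  finally show ?thesis .
qed

lemma map_mat_of_real_real: "map_mat (of_real :: real \<Rightarrow> real) M = M"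
  by (rule eq_matI) auto

lemma Mmat_eigenvector_rows:
  fixes v :: "'a::real_field vec"
  assumes ev: "eigenvector (map_mat of_real (Mmat \<theta> n)) v \<mu>"
  shows Mmat_eigenvector_dim: "1 \<le> n" "v \<in> carrier_vec (2*n)" "v \<noteq> 0\<^sub>v (2*n)"
    and Mmat_first_row: "of_real (1 + cos \<theta>) * v$0 + of_real (sin \<theta>) * v$1 = \<mu> * v$0"
    and Mmat_interior_row:
      "\<And>i. 0 < i \<Longrightarrow> i + 1 < 2*n \<Longrightarrow> of_real (sin \<theta>) * (v$(i-1) + v$(i+1)) = \<mu> * v$i"
    and Mmat_last_row:
      "of_real (sin \<theta>) * v$(2*n-2) - of_real (1 + cos \<theta>) * v$(2*n-1) = \<mu> * v$(2*n-1)"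
proof -
  let ?A = "map_mat (of_real :: real \<Rightarrow> 'a) (Mmat \<theta> n)"
  have "dim_row ?A = 2*n" by (simp add: Mmat_def)
  then have v: "v \<in> carrier_vec (2*n)" and v0: "v \<noteq> 0\<^sub>v (2*n)" and eq: "?A *\<^sub>v v = \<mu> \<cdot>\<^sub>v v"
    using ev unfolding eigenvector_def by auto
  then show "v \<in> carrier_vec (2*n)" "v \<noteq> 0\<^sub>v (2*n)" by auto
  show n: "1 \<le> n"
  proof (rule ccontr)
    assume "\<not> 1 \<le> n"
    then have "v = 0\<^sub>v (2*n)" using v by (intro eq_vecI) auto
    with v0 show False ..
  qed
  have A: "?A = mat (2*n) (2*n) (\<lambda>(i,j). of_real
     (if i = j then (if i = 0 then 1 + cos \<theta> else if i = 2*n - 1 then - (1 + cos \<theta>) else 0)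
      else if i = j + 1 \<or> j = i + 1 then sin \<theta> else 0))"
    unfolding Mmat_def by (rule eq_matI) auto
  have row: "\<mu> * v$i = of_real (if i = 0 then 1 + cos \<theta> else if i = 2*n - 1 then - (1 + cos \<theta>) else 0) * v$i
      + (if 0 < i then of_real (sin \<theta>) * v$(i-1) else 0)
      + (if i + 1 < 2*n then of_real (sin \<theta>) * v$(i+1) else 0)"
    if i: "i < 2*n" for i
  proof -
    have "\<mu> * v$i = (?A *\<^sub>v v) $ i" using eq v i by simp
    then show ?thesis unfolding A by (subst (asm) tridiagonal_mult_vec_nth[OF v i]) auto
  qed
  show "of_real (1 + cos \<theta>) * v$0 + of_real (sin \<theta>) * v$1 = \<mu> * v$0"
    using row[of 0] n by simp
  show "of_real (sin \<theta>) * (v$(i-1) + v$(i+1)) = \<mu> * v$i" if "0 < i" "i + 1 < 2*n" for i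
  proof -
    have "i \<noteq> 2*n - 1" using that by simp
    then show ?thesis using row[of i] that by (simp add: distrib_left)
  qed
  show "of_real (sin \<theta>) * v$(2*n-2) - of_real (1 + cos \<theta>) * v$(2*n-1) = \<mu> * v$(2*n-1)"
    using row[of "2*n-1"] n by (simp add: algebra_simps numeral_2_eq_2)
qed

lemma three_term_recurrence_unique:
  fixes x y :: "nat \<Rightarrow> 'a::field"
  assumes s: "s \<noteq> 0"
    and x: "\<And>j. j + 2 < N \<Longrightarrow> s * (x j + x (j+2)) = \<mu> * x (j+1)"
    and y: "\<And>j. j + 2 < N \<Longrightarrow> s * (y j + y (j+2)) = \<mu> * y (j+1)"
    and init: "x 0 = y 0" "x 1 = y 1"
  shows "j < N \<Longrightarrow> x j = y j"
proof (induction j rule: less_induct)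
  case (less j)
  consider "j = 0" | "j = 1" | k where "j = k + 2"
    by (cases j; cases "j - 1") auto
  then show ?case
  proof cases
    case 3
    have "s * x (k+2) = \<mu> * x (k+1) - s * x k"
      using x[of k] less.prems 3 by (simp add: algebra_simps)
    also have "\<dots> = \<mu> * y (k+1) - s * y k"
      using less.IH[of k] less.IH[of "k+1"] less.prems 3 by simp
    also have "\<dots> = s * y (k+2)"
      using y[of k] less.prems 3 by (simp add: algebra_simps)
    finally show ?thesis using s 3 by simp
  qed (use init in auto)
qed

lemma sin_mult_three_term:
  "sin (real j * x) + sin (real (j+2) * x) = 2 * cos x * sin (real (j+1) * x)"
proof -
  have "real j * x = real (j+1) * x - x" "real (j+2) * x = real (j+1) * x + x"
    by (simp_all add: algebra_simps)
  then show ?thesis by (simp add: sin_add sin_diff)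
qed

definition Mmat_profile :: "real \<Rightarrow> real \<Rightarrow> nat \<Rightarrow> real" where
  "Mmat_profile \<theta> \<phi> j = sin \<theta> * sin (real (j+1) * \<phi>) - (1 + cos \<theta>) * sin (real j * \<phi>)"

lemma Mmat_profile_recurrence:
  "sin \<theta> * (Mmat_profile \<theta> \<phi> j + Mmat_profile \<theta> \<phi> (j+2))
     = 2 * sin \<theta> * cos \<phi> * Mmat_profile \<theta> \<phi> (j+1)"
proof -
  have "Mmat_profile \<theta> \<phi> j + Mmat_profile \<theta> \<phi> (j+2)
      = sin \<theta> * (sin (real (j+1) * \<phi>) + sin (real (j+1+2) * \<phi>))
        - (1 + cos \<theta>) * (sin (real j * \<phi>) + sin (real (j+2) * \<phi>))"
    by (simp add: Mmat_profile_def algebra_simps)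
  also have "\<dots> = 2 * cos \<phi> * Mmat_profile \<theta> \<phi> (j+1)"
    unfolding sin_mult_three_term by (simp add: Mmat_profile_def algebra_simps)
  finally show ?thesis by simp
qed

lemma Mmat_profile_last:
  assumes "1 \<le> N"
  shows "(1 + cos \<theta>) * Mmat_profile \<theta> \<phi> (N-1) + sin \<theta> * Mmat_profile \<theta> \<phi> N
    = (sin \<theta>)\<^sup>2 * sin ((real N + 1) * \<phi>) - (1 + cos \<theta>)\<^sup>2 * sin ((real N - 1) * \<phi>)"
  using assms by (simp add: Mmat_profile_def of_nat_diff algebra_simps power2_eq_square)

lemma Mmat_eigenvector_profile:
  fixes v :: "real vec"
  assumes ev: "eigenvector (Mmat \<theta> n) v (2 * sin \<theta> * cos \<phi>)" and s: "sin \<theta> \<noteq> 0"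
    and j: "j < 2*n"
  shows "sin \<theta> * sin \<phi> * v$j = v$0 * Mmat_profile \<theta> \<phi> j"
proof (rule three_term_recurrence_unique[where N = "2*n" and s = "sin \<theta>" and \<mu> = "2 * sin \<theta> * cos \<phi>", OF s _ _ _ _ j])
  have ev': "eigenvector (map_mat of_real (Mmat \<theta> n)) v (2 * sin \<theta> * cos \<phi>)"
    unfolding map_mat_of_real_real by (rule ev)
  note first_row = Mmat_first_row[OF ev', unfolded of_real_eq_id id_apply]
    and interior_row = Mmat_interior_row[OF ev', unfolded of_real_eq_id id_apply]
  show "sin \<theta> * (sin \<theta> * sin \<phi> * v$i + sin \<theta> * sin \<phi> * v$(i+2))
      = 2 * sin \<theta> * cos \<phi> * (sin \<theta> * sin \<phi> * v$(i+1))" if "i + 2 < 2*n" for i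
  proof -
    have "sin \<theta> * (v$i + v$(i+2)) = 2 * sin \<theta> * cos \<phi> * v$(i+1)"
      using interior_row[of "i+1"] that by simp
    then have "sin \<theta> * sin \<phi> * (sin \<theta> * (v$i + v$(i+2)))
        = sin \<theta> * sin \<phi> * (2 * sin \<theta> * cos \<phi> * v$(i+1))" by simp
    then show ?thesis by (simp add: algebra_simps)
  qed
  show "sin \<theta> * (v$0 * Mmat_profile \<theta> \<phi> i + v$0 * Mmat_profile \<theta> \<phi> (i+2))
      = 2 * sin \<theta> * cos \<phi> * (v$0 * Mmat_profile \<theta> \<phi> (i+1))" for i
  proof -
    have "v$0 * (sin \<theta> * (Mmat_profile \<theta> \<phi> i + Mmat_profile \<theta> \<phi> (i+2)))
        = v$0 * (2 * sin \<theta> * cos \<phi> * Mmat_profile \<theta> \<phi> (i+1))"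
      by (simp only: Mmat_profile_recurrence)
    then show ?thesis by (simp add: algebra_simps)
  qed
  show "sin \<theta> * sin \<phi> * v$0 = v$0 * Mmat_profile \<theta> \<phi> 0" by (simp add: Mmat_profile_def)
  have first: "sin \<theta> * v$1 = (2 * sin \<theta> * cos \<phi> - (1 + cos \<theta>)) * v$0"
    using first_row by (simp add: algebra_simps)
  have "sin \<theta> * sin \<phi> * v$1 = sin \<phi> * (sin \<theta> * v$1)" by simp
  also have "\<dots> = v$0 * (sin \<theta> * sin (2 * \<phi>) - (1 + cos \<theta>) * sin \<phi>)"
    unfolding first sin_double by (simp add: algebra_simps)
  finally show "sin \<theta> * sin \<phi> * v$1 = v$0 * Mmat_profile \<theta> \<phi> 1" by (simp add: Mmat_profile_def)
qed

lemma Mmat_eigenvector_Zset: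
  fixes v :: "real vec"
  assumes ev: "eigenvector (Mmat \<theta> n) v (2 * sin \<theta> * cos \<phi>)"
    and s\<theta>: "sin \<theta> \<noteq> 0" and s\<phi>: "sin \<phi> \<noteq> 0"
  shows "\<phi> \<in> Zset \<theta> (2*n)"
proof -
  define a s lam N w where "a = 1 + cos \<theta>" and "s = sin \<theta>" and "lam = 2 * sin \<theta> * cos \<phi>"
    and "N = 2*n" and "w = Mmat_profile \<theta> \<phi>"
  have ev': "eigenvector (map_mat of_real (Mmat \<theta> n)) v lam"
    unfolding map_mat_of_real_real lam_def by (rule ev)
  note dim = Mmat_eigenvector_dim[OF ev', folded N_def]
    and last_row = Mmat_last_row[OF ev', unfolded of_real_eq_id id_apply, folded a_def s_def N_def]
  have N: "2 \<le> N" using dim(1) by (simp add: N_def)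
  have profile: "s * sin \<phi> * v$j = v$0 * w j" if "j < N" for j
    using Mmat_eigenvector_profile[OF ev s\<theta>] that by (simp add: s_def w_def N_def)
  have v0: "v$0 \<noteq> 0"
  proof
    assume "v$0 = 0"
    then have "v = 0\<^sub>v N" using profile s\<theta> s\<phi> dim(2) by (intro eq_vecI) (auto simp: s_def N_def)
    with dim(3) show False by simp
  qed
  (* The last row of M_n turns into a w_(N-1) + s w_N = 0, which is the equation of Z_N. *)
  have "v$0 * (s * w (N-2) - (a + lam) * w (N-1))
      = s * (s * sin \<phi> * v$(N-2)) - (a + lam) * (s * sin \<phi> * v$(N-1))"
    using profile[of "N-2"] profile[of "N-1"] N by (simp add: algebra_simps)
  also have "\<dots> = s * sin \<phi> * (s * v$(N-2) - a * v$(N-1) - lam * v$(N-1))"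
    by (simp add: algebra_simps)
  also have "\<dots> = 0" using last_row by simp
  finally have "s * w (N-2) = (a + lam) * w (N-1)" using v0 by simp
  moreover have "s * (w (N-2) + w N) = lam * w (N-1)"
    using Mmat_profile_recurrence[of \<theta> \<phi> "N-2"] N
    by (simp add: w_def s_def lam_def numeral_2_eq_2 Suc_diff_Suc)
  ultimately have "a * w (N-1) + s * w N = 0" by (simp add: algebra_simps)
  then show ?thesis
    using Mmat_profile_last[of N \<theta> \<phi>] N by (simp add: Zset_def N_def a_def s_def w_def)
qed

lemma exists_max_abs_entry:
  fixes v :: "'a::linordered_idom vec"
  assumes v: "v \<in> carrier_vec N" and v0: "v \<noteq> 0\<^sub>v N"
  obtains i where "i < N" "0 < \<bar>v$i\<bar>" "\<And>j. j < N \<Longrightarrow> \<bar>v$j\<bar> \<le> \<bar>v$i\<bar>"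
proof -
  have N: "0 < N" using v v0 by (auto intro!: eq_vecI)
  define M where "M = Max ((\<lambda>j. \<bar>v$j\<bar>) ` {..<N})"
  have "M \<in> (\<lambda>j. \<bar>v$j\<bar>) ` {..<N}" unfolding M_def using N by (intro Max_in) auto
  then obtain i where i: "i < N" "\<bar>v$i\<bar> = M" by auto
  have max: "\<bar>v$j\<bar> \<le> \<bar>v$i\<bar>" if "j < N" for j
    unfolding i(2) M_def using that by (intro Max_ge) auto
  have "v$i \<noteq> 0"
  proof
    assume "v$i = 0"
    then have "v = 0\<^sub>v N" using max v by (intro eq_vecI) auto
    with v0 show False ..
  qed
  with i max show ?thesis using that by simp
qed

lemma Mmat_eigenvalue_abs_le:
  fixes v :: "real vec"
  assumes ev: "eigenvector (Mmat \<theta> n) v lam"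
  shows "\<bar>lam\<bar> \<le> 1 + \<bar>cos \<theta>\<bar> + \<bar>sin \<theta>\<bar>"
proof -
  define a s N where "a = 1 + cos \<theta>" and "s = sin \<theta>" and "N = 2*n"
  have ev': "eigenvector (map_mat of_real (Mmat \<theta> n)) v lam"
    unfolding map_mat_of_real_real by (rule ev)
  note dim = Mmat_eigenvector_dim[OF ev', folded N_def]
    and first_row = Mmat_first_row[OF ev', unfolded of_real_eq_id id_apply, folded a_def s_def]
    and interior_row = Mmat_interior_row[OF ev', unfolded of_real_eq_id id_apply, folded s_def N_def]
    and last_row = Mmat_last_row[OF ev', unfolded of_real_eq_id id_apply, folded a_def s_def N_def]
  have N: "2 \<le> N" using dim(1) by (simp add: N_def)
  obtain i where i: "i < N" and vi: "0 < \<bar>v$i\<bar>" and max: "\<And>j. j < N \<Longrightarrow> \<bar>v$j\<bar> \<le> \<bar>v$i\<bar>"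
    using exists_max_abs_entry[OF dim(2,3)] by blast
  have a: "\<bar>a\<bar> \<le> 1 + \<bar>cos \<theta>\<bar>" by (simp add: a_def)
  consider "i = 0" | "0 < i" "i + 1 < N" | "i = N - 1" "0 < i"
    using i N by linarith
  then show ?thesis
  proof cases
    case 1
    have "(lam - a) * v$i = s * v$1" using first_row 1 by (simp add: algebra_simps)
    then have "\<bar>lam - a\<bar> * \<bar>v$i\<bar> = \<bar>s\<bar> * \<bar>v$1\<bar>" by (metis abs_mult)
    also have "\<dots> \<le> \<bar>s\<bar> * \<bar>v$i\<bar>" using max[of 1] N by (simp add: mult_left_mono)
    finally have "\<bar>lam - a\<bar> \<le> \<bar>s\<bar>" using vi by (rule mult_right_le_imp_le)
    then show ?thesis using a abs_sin_le_one[of \<theta>] unfolding s_def by linarith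
  next
    case 2
    have "\<bar>lam\<bar> * \<bar>v$i\<bar> = \<bar>s\<bar> * \<bar>v$(i-1) + v$(i+1)\<bar>"
      using interior_row[OF 2] by (metis abs_mult)
    also have "\<dots> \<le> \<bar>s\<bar> * (\<bar>v$(i-1)\<bar> + \<bar>v$(i+1)\<bar>)"
      by (intro mult_left_mono abs_triangle_ineq) simp
    also have "\<dots> \<le> \<bar>s\<bar> * (2 * \<bar>v$i\<bar>)"
      using max[of "i-1"] max[of "i+1"] 2 by (intro mult_left_mono) (simp_all add: less_imp_diff_less)
    finally have "\<bar>lam\<bar> * \<bar>v$i\<bar> \<le> (2 * \<bar>s\<bar>) * \<bar>v$i\<bar>" by (simp add: ac_simps)
    then have "\<bar>lam\<bar> \<le> 2 * \<bar>s\<bar>" using vi by (rule mult_right_le_imp_le)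
    then show ?thesis using abs_sin_le_one[of \<theta>] abs_ge_zero[of "cos \<theta>"] unfolding s_def by linarith
  next
    case 3
    have "(lam + a) * v$i = s * v$(N-2)" using last_row 3 by (simp add: algebra_simps)
    then have "\<bar>lam + a\<bar> * \<bar>v$i\<bar> = \<bar>s\<bar> * \<bar>v$(N-2)\<bar>" by (metis abs_mult)
    also have "\<dots> \<le> \<bar>s\<bar> * \<bar>v$i\<bar>" using max[of "N-2"] N by (simp add: mult_left_mono)
    finally have "\<bar>lam + a\<bar> \<le> \<bar>s\<bar>" using vi by (rule mult_right_le_imp_le)
    then show ?thesis using a abs_sin_le_one[of \<theta>] unfolding s_def by linarith
  qed
qed

section \<open>Symmetry and monotonicity of f\<close>

lemma sin_odd_mult_reflect:
  assumes "odd m"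
  shows "sin (real m * (pi - x)) = sin (real m * x)" "sin (real m * (pi + x)) = - sin (real m * x)"
proof -
  have "cos (real m * pi) = -1" using assms by simp
  then show "sin (real m * (pi - x)) = sin (real m * x)" "sin (real m * (pi + x)) = - sin (real m * x)"
    by (simp_all add: right_diff_distrib distrib_left sin_diff sin_add)
qed

lemma fn_reflect:
  assumes "even N" "0 < N"
  shows "fn N (pi - \<phi>) = fn N \<phi>" "fn N (pi + \<phi>) = fn N \<phi>"
proof -
  have e: "real N - 1 = real (N - 1)" "real N + 1 = real (N + 1)" using assms by auto
  have odd: "odd (N - 1)" "odd (N + 1)" using assms by auto
  show "fn N (pi - \<phi>) = fn N \<phi>" "fn N (pi + \<phi>) = fn N \<phi>"
    unfolding fn_def e sin_odd_mult_reflect[OF odd(1)] sin_odd_mult_reflect[OF odd(2)] by simp_all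
qed

lemma abs_sin_Suc_mult_le:
  "\<bar>sin (real (Suc m) * x)\<bar> \<le> \<bar>sin (real m * x)\<bar> * \<bar>cos x\<bar> + \<bar>sin x\<bar>"
proof -
  have e: "real (Suc m) * x = real m * x + x" by (simp add: algebra_simps)
  have "\<bar>sin (real (Suc m) * x)\<bar> = \<bar>sin (real m * x) * cos x + cos (real m * x) * sin x\<bar>"
    unfolding e sin_add ..
  also have "\<dots> \<le> \<bar>sin (real m * x)\<bar> * \<bar>cos x\<bar> + \<bar>cos (real m * x)\<bar> * \<bar>sin x\<bar>"
    by (metis abs_mult abs_triangle_ineq)
  also have "\<dots> \<le> \<bar>sin (real m * x)\<bar> * \<bar>cos x\<bar> + \<bar>sin x\<bar>"
    by (intro add_mono mult_left_le_one_le) auto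
  finally show ?thesis .
qed

lemma abs_sin_mult_le: "\<bar>sin (real m * x)\<bar> \<le> real m * \<bar>sin x\<bar>"
proof (induction m)
  case (Suc m)
  have "\<bar>sin (real m * x)\<bar> * \<bar>cos x\<bar> \<le> \<bar>sin (real m * x)\<bar>" by (intro mult_left_le) auto
  moreover have "real (Suc m) * \<bar>sin x\<bar> = real m * \<bar>sin x\<bar> + \<bar>sin x\<bar>" by (simp add: distrib_right)
  ultimately show ?case using abs_sin_Suc_mult_le[of m x] Suc.IH by linarith
qed simp

lemma abs_sin_mult_less:
  assumes x: "sin x \<noteq> 0" and m: "2 \<le> m"
  shows "\<bar>sin (real m * x)\<bar> < real m * \<bar>sin x\<bar>"
proof -
  obtain k where k: "m = Suc k" "1 \<le> k" using m by (cases m) auto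
  have "0 < (sin x)\<^sup>2" using x by simp
  then have "(cos x)\<^sup>2 < 1" using sin_cos_squared_add[of x] by linarith
  then have cos: "\<bar>cos x\<bar> < 1" by (simp add: abs_square_less_1)
  have "\<bar>sin (real k * x)\<bar> * \<bar>cos x\<bar> + \<bar>sin x\<bar> < real k * \<bar>sin x\<bar> + \<bar>sin x\<bar>"
  proof (cases "sin (real k * x) = 0")
    case True
    then show ?thesis using x k by simp
  next
    case False
    then have "\<bar>sin (real k * x)\<bar> * \<bar>cos x\<bar> < \<bar>sin (real k * x)\<bar>"
      using cos by (simp add: mult_less_cancel_left1)
    then show ?thesis using abs_sin_mult_le[of k x] by linarith
  qed
  then show ?thesis using abs_sin_Suc_mult_le[of k x] k by (simp add: distrib_right)
qed

lemma fn_has_real_derivative: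
  assumes "sin ((real N + 1) * x) \<noteq> 0"
  shows "(fn N has_real_derivative
           (real N * sin (2*x) - sin (2 * real N * x)) / (sin ((real N + 1) * x))\<^sup>2) (at x)"
proof -
  have "(fn N has_real_derivative
      (cos ((real N - 1) * x) * (real N - 1) * sin ((real N + 1) * x)
       - sin ((real N - 1) * x) * (cos ((real N + 1) * x) * (real N + 1)))
      / (sin ((real N + 1) * x) * sin ((real N + 1) * x))) (at x)"
    unfolding fn_def using assms by (auto intro!: derivative_eq_intros)
  moreover have "cos ((real N - 1) * x) * (real N - 1) * sin ((real N + 1) * x)
      - sin ((real N - 1) * x) * (cos ((real N + 1) * x) * (real N + 1))
      = real N * sin (2*x) - sin (2 * real N * x)"
  proof -
    have e: "2*x = (real N + 1) * x - (real N - 1) * x" "2 * real N * x = (real N - 1) * x + (real N + 1) * x"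
      by (simp_all add: algebra_simps)
    show ?thesis unfolding e sin_diff sin_add by (simp add: algebra_simps)
  qed
  ultimately show ?thesis by (simp add: power2_eq_square)
qed

lemma fn_derivative_numerator_pos:
  assumes "2 \<le> N" "0 < x" "x < pi/2"
  shows "0 < real N * sin (2*x) - sin (2 * real N * x)"
proof -
  have "0 < sin (2*x)" using assms by (intro sin_gt_zero) auto
  moreover have "\<bar>sin (real N * (2*x))\<bar> < real N * \<bar>sin (2*x)\<bar>"
    using abs_sin_mult_less[of "2*x" N] calculation assms by simp
  ultimately show ?thesis by (simp add: algebra_simps)
qed

lemma fn_derivative_numerator_neg:
  assumes "2 \<le> N" "pi/2 < x" "x < pi"
  shows "real N * sin (2*x) - sin (2 * real N * x) < 0"
proof -
  have "sin (2*x) < 0" using assms by (intro sin_lt_zero) auto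
  moreover have "\<bar>sin (real N * (2*x))\<bar> < real N * \<bar>sin (2*x)\<bar>"
    using abs_sin_mult_less[of "2*x" N] calculation assms by simp
  ultimately show ?thesis by (simp add: algebra_simps)
qed

lemma fn_strict_mono_on:
  assumes N: "2 \<le> N" and ab: "0 \<le> a" "b \<le> pi/2"
    and poles: "\<And>t. a < t \<Longrightarrow> t < b \<Longrightarrow> sin ((real N + 1) * t) \<noteq> 0"
  shows "strict_mono_on {a<..<b} (fn N)"
proof (rule strict_mono_onI)
  fix x y assume xy: "x \<in> {a<..<b}" "y \<in> {a<..<b}" "x < y"
  show "fn N x < fn N y"
  proof (rule DERIV_pos_imp_increasing[OF \<open>x < y\<close>])
    fix t assume "x \<le> t" "t \<le> y"
    with xy have t: "a < t" "t < b" by auto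
    show "\<exists>D. (fn N has_real_derivative D) (at t) \<and> 0 < D"
      using fn_has_real_derivative[OF poles[OF t]] fn_derivative_numerator_pos[OF N, of t] poles[OF t] t ab
      by (intro exI conjI) (auto intro!: divide_pos_pos)
  qed
qed

lemma fn_strict_antimono_on:
  assumes N: "2 \<le> N" and ab: "pi/2 \<le> a" "b \<le> pi"
    and poles: "\<And>t. a < t \<Longrightarrow> t < b \<Longrightarrow> sin ((real N + 1) * t) \<noteq> 0"
  shows "strict_antimono_on {a<..<b} (fn N)"
proof (rule monotone_onI)
  fix x y assume xy: "x \<in> {a<..<b}" "y \<in> {a<..<b}" "x < y"
  show "fn N y < fn N x"
  proof (rule DERIV_neg_imp_decreasing[OF \<open>x < y\<close>])
    fix t assume "x \<le> t" "t \<le> y"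
    with xy have t: "a < t" "t < b" by auto
    show "\<exists>D. (fn N has_real_derivative D) (at t) \<and> D < 0"
      using fn_has_real_derivative[OF poles[OF t]] fn_derivative_numerator_neg[OF N, of t] poles[OF t] t ab
      by (intro exI conjI) (auto intro!: divide_neg_pos)
  qed
qed

lemma sin_Iint_nonzero:
  assumes x: "x \<in> Iint N k"
  shows "sin ((real N + 1) * x) \<noteq> 0"
proof
  assume "sin ((real N + 1) * x) = 0"
  then obtain i :: int where i: "(real N + 1) * x = of_int i * pi"
    by (auto simp: sin_zero_iff_int2)
  have "real k * pi < (real N + 1) * x" "(real N + 1) * x < (real k + 1) * pi"
    using x by (auto simp: Iint_def field_simps)
  then have "real k < of_int i" "of_int i < real k + 1"
    unfolding i by (simp_all add: mult_less_cancel_right_pos)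
  then have "int k < i" "i < int k + 1" by linarith+
  then show False by simp
qed

lemma fn_strictly_monotone_on_Iint:
  assumes n: "1 \<le> n" and k: "k \<le> 2*n" "k \<noteq> n"
  shows "strict_mono_on (Iint (2*n) k) (fn (2*n)) \<or> strict_antimono_on (Iint (2*n) k) (fn (2*n))"
proof -
  have N: "2 \<le> 2*n" using n by simp
  have I: "Iint (2*n) k = {real k / (2 * real n + 1) * pi <..< (real k + 1) / (2 * real n + 1) * pi}"
    by (simp add: Iint_def)
  have poles: "sin ((real (2*n) + 1) * t) \<noteq> 0" if "t \<in> Iint (2*n) k" for t
    using that by (rule sin_Iint_nonzero)
  show ?thesis
  proof (cases "k < n")
    case True
    then have "(real k + 1) / (2 * real n + 1) \<le> 1/2" by (simp add: field_simps)
    then have "(real k + 1) / (2 * real n + 1) * pi \<le> 1/2 * pi"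
      by (rule mult_right_mono) simp
    then show ?thesis unfolding I using poles I by (intro disjI1 fn_strict_mono_on[OF N]) auto
  next
    case False
    with k have "1/2 \<le> real k / (2 * real n + 1)" "(real k + 1) / (2 * real n + 1) \<le> 1"
      by (simp_all add: field_simps)
    then have "1/2 * pi \<le> real k / (2 * real n + 1) * pi" "(real k + 1) / (2 * real n + 1) * pi \<le> 1 * pi"
      by (simp_all only: mult_right_mono pi_ge_zero)
    then show ?thesis unfolding I using poles I by (intro disjI2 fn_strict_antimono_on[OF N]) auto
  qed
qed

lemma fn_monot_on_Iint:
  assumes "1 \<le> n" "k \<le> 2*n" "k \<noteq> n" "S \<subseteq> Iint (2*n) k"
  shows "monot_on S (fn (2*n))"
  using fn_strictly_monotone_on_Iint[OF assms(1-3)] assms(4)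
  unfolding monot_on_def strict_mono_iff_mono strict_antimono_iff_antimono
  by (meson monotone_on_subset)

lemma fn_inj_on_Iint:
  assumes "1 \<le> n" "k \<le> 2*n" "k \<noteq> n"
  shows "inj_on (fn (2*n)) (Iint (2*n) k)"
  using fn_strictly_monotone_on_Iint[OF assms] strict_mono_iff_mono strict_antimono_iff_antimono
  by blast

lemma end_intervals_subset_Iint:
  shows "{0 <..< pi / (2 * (2 * real n + 1))} \<subseteq> Iint (2*n) 0"
    and "{pi / (2 * (2 * real n + 1)) ..< pi / (2 * real n + 1)} \<subseteq> Iint (2*n) 0"
    and "{pi - pi / (2 * (2 * real n + 1)) <..< pi} \<subseteq> Iint (2*n) (2*n)"
    and "{2 * real n * pi / (2 * real n + 1) <.. pi - pi / (2 * (2 * real n + 1))} \<subseteq> Iint (2*n) (2*n)"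
proof -
  define d where "d = pi / (2 * real n + 1)"
  have d: "0 < d" by (simp add: d_def)
  have e: "real 0 / (real (2*n) + 1) * pi = 0" "(real 0 + 1) / (real (2*n) + 1) * pi = d"
    "real (2*n) / (real (2*n) + 1) * pi = pi - d" "(real (2*n) + 1) / (real (2*n) + 1) * pi = pi"
    "2 * real n * pi / (2 * real n + 1) = pi - d" "pi / (2 * (2 * real n + 1)) = d / 2"
    by (simp_all add: d_def field_simps)
  show "{0 <..< pi / (2 * (2 * real n + 1))} \<subseteq> Iint (2*n) 0"
    and "{pi / (2 * (2 * real n + 1)) ..< pi / (2 * real n + 1)} \<subseteq> Iint (2*n) 0"
    and "{pi - pi / (2 * (2 * real n + 1)) <..< pi} \<subseteq> Iint (2*n) (2*n)"
    and "{2 * real n * pi / (2 * real n + 1) <.. pi - pi / (2 * (2 * real n + 1))} \<subseteq> Iint (2*n) (2*n)"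
    unfolding Iint_def e d_def[symmetric] using d by auto
qed

section \<open>The zero set Z\<close>

lemma one_plus_cos_pos:
  assumes "0 < \<theta>" "\<theta> < pi"
  shows "0 < 1 + cos \<theta>"
  using cos_monotone_0_pi[of \<theta> pi] assms by simp

lemma fn_on_Zset:
  assumes "\<phi> \<in> Zset \<theta> N" "sin ((real N + 1) * \<phi>) \<noteq> 0" "1 + cos \<theta> \<noteq> 0"
  shows "fn N \<phi> = (sin \<theta>)\<^sup>2 / (1 + cos \<theta>)\<^sup>2"
  using assms unfolding Zset_def fn_def by (simp add: field_simps)

lemma card_le_1_if_inj_on_const:
  assumes "inj_on f A" "\<And>x. x \<in> A \<Longrightarrow> f x = c"
  shows "finite A \<and> card A \<le> 1"
proof -
  have sub: "f ` A \<subseteq> {c}" using assms(2) by auto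
  have "finite (f ` A)" using sub by (rule finite_subset) simp
  moreover have "card (f ` A) \<le> card {c}" using card_mono[OF _ sub] by simp
  ultimately show ?thesis using assms(1) by (simp add: finite_image_iff card_image)
qed

lemma Zset_Iint_card_le_1:
  assumes a: "1 + cos \<theta> \<noteq> 0" and n: "1 \<le> n" "k \<le> 2*n" "k \<noteq> n"
  shows "finite (Zset \<theta> (2*n) \<inter> Iint (2*n) k) \<and> card (Zset \<theta> (2*n) \<inter> Iint (2*n) k) \<le> 1"
proof (rule card_le_1_if_inj_on_const)
  show "inj_on (fn (2*n)) (Zset \<theta> (2*n) \<inter> Iint (2*n) k)"
    using fn_inj_on_Iint[OF n] by (rule inj_on_subset) blast
  show "fn (2*n) \<phi> = (sin \<theta>)\<^sup>2 / (1 + cos \<theta>)\<^sup>2" if "\<phi> \<in> Zset \<theta> (2*n) \<inter> Iint (2*n) k" for \<phi>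
  proof (rule fn_on_Zset)
    show "\<phi> \<in> Zset \<theta> (2*n)" using that by blast
    show "sin ((real (2*n) + 1) * \<phi>) \<noteq> 0" using that sin_Iint_nonzero[of \<phi> "2*n" k] by blast
  qed (rule a)
qed

lemma sin_sign_between:
  assumes "real m * pi < z" "z < (real m + 1) * pi"
  shows "0 < (-1)^m * sin z"
proof -
  have "sin z = sin ((z - real m * pi) + real m * pi)" by simp
  also have "\<dots> = sin (z - real m * pi) * (-1)^m" unfolding sin_add by simp
  finally have "(-1)^m * sin z = sin (z - real m * pi)" by simp
  also have "\<dots> > 0" using assms by (intro sin_gt_zero) (auto simp: algebra_simps)
  finally show ?thesis .
qed

lemma sign_change_imp_root:
  fixes h :: "real \<Rightarrow> real"
  assumes "a \<le> b" "continuous_on {a..b} h" "h a * h b < 0"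
  shows "\<exists>x. a < x \<and> x < b \<and> h x = 0"
proof -
  have "\<exists>x. a \<le> x \<and> x \<le> b \<and> h x = 0"
  proof (cases "h a < 0")
    case True
    then have "0 < h b" using assms(3) by (simp add: mult_less_0_iff)
    then show ?thesis using IVT'[of h a 0 b] True assms(1,2) by auto
  next
    case False
    then have "h b < 0" "0 < h a" using assms(3) by (auto simp: mult_less_0_iff)
    then show ?thesis using IVT2'[of h b 0 a] assms(1,2) by auto
  qed
  moreover have "h a \<noteq> 0" "h b \<noteq> 0" using assms(3) by auto
  ultimately show ?thesis by (metis order.not_eq_order_implies_strict)
qed

lemma Zset_residual_at_grid:
  "(1 + cos \<theta>)\<^sup>2 * sin ((real N - 1) * (real m / (real N + 1) * pi))
     - (sin \<theta>)\<^sup>2 * sin ((real N + 1) * (real m / (real N + 1) * pi))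
   = - ((1 + cos \<theta>)\<^sup>2 * (-1)^m * sin (2 * real m / (real N + 1) * pi))"
proof -
  have "0 < real N + 1" by simp
  then have e: "(real N + 1) * (real m / (real N + 1) * pi) = real m * pi"
    "(real N - 1) * (real m / (real N + 1) * pi) = real m * pi - 2 * real m / (real N + 1) * pi"
    by (simp_all add: field_simps)
  show ?thesis unfolding e sin_diff by simp
qed

lemma Zset_Iint_nonempty:
  assumes a: "1 + cos \<theta> \<noteq> 0" and k: "1 \<le> k" "k \<le> 2*n - 1" "k \<noteq> n"
  shows "Zset \<theta> (2*n) \<inter> Iint (2*n) k \<noteq> {}"
proof -
  define D where "D = real (2*n) + 1"
  have D: "0 < D" by (simp add: D_def)
  define h where "h \<phi> = (1 + cos \<theta>)\<^sup>2 * sin ((real (2*n) - 1) * \<phi>) - (sin \<theta>)\<^sup>2 * sin ((real (2*n) + 1) * \<phi>)"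
    for \<phi>
  have h_grid: "h (real m / D * pi) = - ((1 + cos \<theta>)\<^sup>2 * (-1)^m * sin (2 * real m / D * pi))" for m
    unfolding h_def D_def by (rule Zset_residual_at_grid)
  define c1 c2 where "c1 = 2 * real k / D" and "c2 = 2 * (real k + 1) / D"
  obtain m :: nat where m: "real m < c1" "c2 < real m + 1"
  proof (cases "k < n")
    case True
    then have "real k + 1 \<le> real n" by linarith
    then show ?thesis using k D by (intro that[of 0]) (auto simp: c1_def c2_def D_def field_simps)
  next
    case False
    then have "real n + 1 \<le> real k" "real k + 1 \<le> 2 * real n" using k by linarith+
    then show ?thesis using D by (intro that[of 1]) (auto simp: c1_def c2_def D_def field_simps)
  qed
  have "c1 < c2" using D by (simp add: c1_def c2_def divide_strict_right_mono)
  then have signs: "0 < (-1)^m * sin (c1 * pi)" "0 < (-1)^m * sin (c2 * pi)"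
    using m by (auto intro!: sin_sign_between mult_strict_right_mono)
  have k1: "real (k+1) = real k + 1" by simp
  have "h (real k / D * pi) * h ((real k + 1) / D * pi)
      = - ((1 + cos \<theta>)\<^sup>2)\<^sup>2 * (((-1)^m * sin (c1 * pi)) * ((-1)^m * sin (c2 * pi)))"
    unfolding h_grid[of k] h_grid[of "k+1", unfolded k1] by (simp add: c1_def c2_def algebra_simps power2_eq_square)
  also have "\<dots> < 0" using signs a by (simp add: mult_pos_pos)
  finally have "h (real k / D * pi) * h ((real k + 1) / D * pi) < 0" .
  moreover have "real k / D * pi \<le> (real k + 1) / D * pi" using D by (simp add: divide_right_mono)
  moreover have "continuous_on {real k / D * pi .. (real k + 1) / D * pi} h"
    unfolding h_def by (intro continuous_intros)
  ultimately obtain x where "real k / D * pi < x" "x < (real k + 1) / D * pi" "h x = 0"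
    using sign_change_imp_root by blast
  then have "x \<in> Zset \<theta> (2*n) \<inter> Iint (2*n) k" by (simp add: Zset_def Iint_def h_def D_def)
  then show ?thesis by blast
qed

lemma Zset_Iint_card_eq_1:
  assumes a: "1 + cos \<theta> \<noteq> 0" and k: "1 \<le> k" "k \<le> 2*n - 1" "k \<noteq> n"
  shows "card (Zset \<theta> (2*n) \<inter> Iint (2*n) k) = 1"
proof -
  have "finite (Zset \<theta> (2*n) \<inter> Iint (2*n) k)" "card (Zset \<theta> (2*n) \<inter> Iint (2*n) k) \<le> 1"
    using Zset_Iint_card_le_1[OF a, of n k] k by auto
  moreover have "Zset \<theta> (2*n) \<inter> Iint (2*n) k \<noteq> {}" by (rule Zset_Iint_nonempty[OF a k])
  ultimately show ?thesis by (simp add: le_antisym Suc_leI card_gt_0_iff)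
qed

lemma Zset_Iint_middle_empty:
  assumes s: "sin \<theta> \<noteq> 0" and a: "1 + cos \<theta> \<noteq> 0" and n: "1 \<le> n"
  shows "Zset \<theta> (2*n) \<inter> Iint (2*n) n = {}"
proof (rule ccontr)
  assume "Zset \<theta> (2*n) \<inter> Iint (2*n) n \<noteq> {}"
  then obtain x where Z: "(1 + cos \<theta>)\<^sup>2 * sin ((real (2*n) - 1) * x) = (sin \<theta>)\<^sup>2 * sin ((real (2*n) + 1) * x)"
    and x: "real n / (2 * real n + 1) * pi < x" "x < (real n + 1) / (2 * real n + 1) * pi"
    by (auto simp: Zset_def Iint_def)
  obtain m where m: "n = Suc m" using n by (cases n) auto
  define D where "D = 2 * real n + 1"
  have D: "0 < D" and c: "0 < 2 * real n - 1" using n by (simp_all add: D_def)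
  have plus: "0 < (-1)^n * sin ((real (2*n) + 1) * x)"
  proof (rule sin_sign_between)
    show "real n * pi < (real (2*n) + 1) * x" "(real (2*n) + 1) * x < (real n + 1) * pi"
      using x D by (simp_all add: D_def field_simps)
  qed
  have minus: "0 < (-1)^m * sin ((real (2*n) - 1) * x)"
  proof (rule sin_sign_between)
    have "(2 * real n - 1) * (real n / D * pi) - real m * pi = pi / D"
      "(real m + 1) * pi - (2 * real n - 1) * ((real n + 1) / D * pi) = pi / D"
      using D m by (simp_all add: D_def field_simps)
    moreover have "(2 * real n - 1) * (real n / D * pi) < (2 * real n - 1) * x"
      "(2 * real n - 1) * x < (2 * real n - 1) * ((real n + 1) / D * pi)"
      unfolding D_def using mult_strict_left_mono[OF x(1) c] mult_strict_left_mono[OF x(2) c] .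
    moreover have "0 < pi / D" using D by simp
    ultimately show "real m * pi < (real (2*n) - 1) * x" "(real (2*n) - 1) * x < (real m + 1) * pi"
      by simp_all
  qed
  have lhs: "0 < (1 + cos \<theta>)\<^sup>2 * ((-1)^m * sin ((real (2*n) - 1) * x))"
    using minus a by simp
  have rhs: "0 < (sin \<theta>)\<^sup>2 * ((-1)^n * sin ((real (2*n) + 1) * x))"
    using plus s by simp
  have "(1 + cos \<theta>)\<^sup>2 * ((-1)^m * sin ((real (2*n) - 1) * x))
      = (-1)^m * ((1 + cos \<theta>)\<^sup>2 * sin ((real (2*n) - 1) * x))" by (simp add: ac_simps)
  also have "\<dots> = (-1)^m * ((sin \<theta>)\<^sup>2 * sin ((real (2*n) + 1) * x))" by (simp only: Z)
  also have "\<dots> = - ((sin \<theta>)\<^sup>2 * ((-1)^n * sin ((real (2*n) + 1) * x)))" using m by simp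
  finally have "(1 + cos \<theta>)\<^sup>2 * ((-1)^m * sin ((real (2*n) - 1) * x))
      = - ((sin \<theta>)\<^sup>2 * ((-1)^n * sin ((real (2*n) + 1) * x)))" .
  with lhs rhs show False by linarith
qed

lemma zero_pi_in_Zset: "{0, pi} \<subseteq> Zset \<theta> N"
proof -
  have "sin ((real N - 1) * pi) = 0" "sin ((real N + 1) * pi) = 0"
    by (simp_all add: left_diff_distrib distrib_right sin_diff sin_add)
  then show ?thesis by (simp add: Zset_def)
qed

lemma Zset_pi_half:
  assumes N: "1 \<le> N"
  shows "Zset (pi/2) N \<inter> {0..pi} \<subseteq> {0, pi} \<union> {(2 * real j - 1) / (2 * real N) * pi | j. j \<in> {1..N}}"
proof
  fix \<phi> assume "\<phi> \<in> Zset (pi/2) N \<inter> {0..pi}"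
  then have Z: "sin ((real N - 1) * \<phi>) = sin ((real N + 1) * \<phi>)" and \<phi>: "0 \<le> \<phi>" "\<phi> \<le> pi"
    by (auto simp: Zset_def)
  have e: "(real N + 1) * \<phi> = real N * \<phi> + \<phi>" "(real N - 1) * \<phi> = real N * \<phi> - \<phi>"
    by (simp_all add: algebra_simps)
  have "sin ((real N + 1) * \<phi>) - sin ((real N - 1) * \<phi>) = 2 * cos (real N * \<phi>) * sin \<phi>"
    unfolding e sin_add sin_diff by simp
  then have "sin \<phi> = 0 \<or> cos (real N * \<phi>) = 0" using Z by auto
  then show "\<phi> \<in> {0, pi} \<union> {(2 * real j - 1) / (2 * real N) * pi | j. j \<in> {1..N}}"
  proof
    assume "sin \<phi> = 0"
    then have "\<not> (0 < \<phi> \<and> \<phi> < pi)" using sin_gt_zero by force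
    then show ?thesis using \<phi> by auto
  next
    assume "cos (real N * \<phi>) = 0"
    then obtain i :: int where i: "odd i" "real N * \<phi> = of_int i * (pi/2)"
      by (auto simp: cos_zero_iff_int)
    then obtain j :: int where j: "i = 2 * j + 1" by (meson oddE)
    have \<phi>_eq: "\<phi> = (2 * of_int j + 1) / (2 * real N) * pi"
      using i(2) j N by (simp add: field_simps)
    have "(2 * of_int j + 1) / (2 * real N) = \<phi> / pi" using \<phi>_eq by simp
    moreover have "0 \<le> \<phi> / pi" "\<phi> / pi \<le> 1" using \<phi> by simp_all
    ultimately have "0 \<le> (2 * of_int j + 1) / (2 * real N)" "(2 * of_int j + 1) / (2 * real N) \<le> 1"
      by linarith+
    then have "0 \<le> 2 * real_of_int j + 1" "2 * real_of_int j + 1 \<le> 2 * real N"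
      using N by (simp_all add: zero_le_divide_iff divide_le_eq_1)
    then have "0 \<le> 2 * j + 1" "2 * j + 1 \<le> 2 * int N" by linarith+
    then have "0 \<le> j" "j < int N" by presburger+
    then have "nat j + 1 \<in> {1..N}" "\<phi> = (2 * real (nat j + 1) - 1) / (2 * real N) * pi"
      using \<phi>_eq by auto
    then show ?thesis by blast
  qed
qed

section \<open>Location of the eigenvalues\<close>

lemma Iint_subset_0_pi:
  assumes "k \<le> N"
  shows "Iint N k \<subseteq> {0<..<pi}"
proof
  fix x assume "x \<in> Iint N k"
  then have x: "real k / (real N + 1) * pi < x" "x < (real k + 1) / (real N + 1) * pi"
    by (auto simp: Iint_def)
  have "(real k + 1) / (real N + 1) \<le> 1" using assms by simp
  then have "(real k + 1) / (real N + 1) * pi \<le> 1 * pi" by (rule mult_right_mono) simp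
  with x(2) have "x < pi" by simp
  moreover have "0 \<le> real k / (real N + 1) * pi" by simp
  with x(1) have "0 < x" by linarith
  ultimately show "x \<in> {0<..<pi}" by simp
qed

lemma spec_Mmat_cosimg_subset:
  assumes s: "sin \<theta> \<noteq> 0" and k: "k \<le> 2*n"
  shows "spec (Mmat \<theta> n) \<inter> cosimg \<theta> (Iint (2*n) k)
    \<subseteq> (\<lambda>\<phi>. 2 * sin \<theta> * cos \<phi>) ` (Zset \<theta> (2*n) \<inter> Iint (2*n) k)"
proof
  fix lam assume "lam \<in> spec (Mmat \<theta> n) \<inter> cosimg \<theta> (Iint (2*n) k)"
  then obtain v \<phi> where ev: "eigenvector (Mmat \<theta> n) v (2 * sin \<theta> * cos \<phi>)"
    and \<phi>: "\<phi> \<in> Iint (2*n) k" and lam: "lam = 2 * sin \<theta> * cos \<phi>"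
    unfolding spec_def cosimg_def eigenvalue_def by auto
  have "sin \<phi> \<noteq> 0" using Iint_subset_0_pi[OF k] \<phi> sin_gt_zero by fastforce
  then have "\<phi> \<in> Zset \<theta> (2*n)" using Mmat_eigenvector_Zset[OF ev s] by blast
  then show "lam \<in> (\<lambda>\<phi>. 2 * sin \<theta> * cos \<phi>) ` (Zset \<theta> (2*n) \<inter> Iint (2*n) k)"
    using \<phi> lam by blast
qed

lemma spec_Mmat_cosimg_card_le_1:
  assumes s: "sin \<theta> \<noteq> 0" and a: "1 + cos \<theta> \<noteq> 0" and n: "1 \<le> n" "k \<le> 2*n" "k \<noteq> n"
  shows "finite (spec (Mmat \<theta> n) \<inter> cosimg \<theta> (Iint (2*n) k))
    \<and> card (spec (Mmat \<theta> n) \<inter> cosimg \<theta> (Iint (2*n) k)) \<le> 1"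
proof -
  let ?Z = "Zset \<theta> (2*n) \<inter> Iint (2*n) k"
  have Z: "finite ?Z" "card ?Z \<le> 1" using Zset_Iint_card_le_1[OF a n] by auto
  have sub: "spec (Mmat \<theta> n) \<inter> cosimg \<theta> (Iint (2*n) k) \<subseteq> (\<lambda>\<phi>. 2 * sin \<theta> * cos \<phi>) ` ?Z"
    using spec_Mmat_cosimg_subset[OF s n(2)] .
  then have "finite (spec (Mmat \<theta> n) \<inter> cosimg \<theta> (Iint (2*n) k))"
    using Z(1) by (blast intro: finite_subset)
  moreover have "card (spec (Mmat \<theta> n) \<inter> cosimg \<theta> (Iint (2*n) k)) \<le> card ?Z"
    using sub Z(1) by (meson card_image_le card_mono finite_imageI le_trans)
  ultimately show ?thesis using Z(2) by linarith
qed

lemma spec_Mmat_cosimg_middle_empty: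
  assumes "sin \<theta> \<noteq> 0" "1 + cos \<theta> \<noteq> 0" "1 \<le> n"
  shows "spec (Mmat \<theta> n) \<inter> cosimg \<theta> (Iint (2*n) n) = {}"
  using spec_Mmat_cosimg_subset[OF assms(1), of n n] Zset_Iint_middle_empty[OF assms] by auto

lemma spec_Mmat_pi_half:
  "spec (Mmat (pi/2) n)
    \<subseteq> {-2, 2} \<union> {2 * cos ((2 * real k - 1) / (2 * real (2*n)) * pi) | k. k \<in> {1..2*n}}"
proof
  fix lam assume "lam \<in> spec (Mmat (pi/2) n)"
  then obtain v where ev: "eigenvector (Mmat (pi/2) n) v lam"
    unfolding spec_def eigenvalue_def by auto
  have "eigenvector (map_mat of_real (Mmat (pi/2) n)) v lam"
    unfolding map_mat_of_real_real by (rule ev)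
  from Mmat_eigenvector_dim(1)[OF this] have n: "1 \<le> 2*n" by simp
  have bound: "\<bar>lam\<bar> \<le> 2" using Mmat_eigenvalue_abs_le[OF ev] by simp
  show "lam \<in> {-2, 2} \<union> {2 * cos ((2 * real k - 1) / (2 * real (2*n)) * pi) | k. k \<in> {1..2*n}}"
  proof (cases "\<bar>lam\<bar> = 2")
    case True
    then show ?thesis by auto
  next
    case False
    with bound have l: "-1 < lam/2" "lam/2 < 1" by auto
    define \<phi> where "\<phi> = arccos (lam/2)"
    have \<phi>: "0 < \<phi>" "\<phi> < pi" "cos \<phi> = lam/2"
      unfolding \<phi>_def using arccos_lt_bounded[OF l] cos_arccos l by auto
    then have "lam = 2 * sin (pi/2) * cos \<phi>" by simp
    then have "\<phi> \<in> Zset (pi/2) (2*n)"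
      using Mmat_eigenvector_Zset[of "pi/2" n v \<phi>] ev sin_gt_zero[OF \<phi>(1,2)] by simp
    then obtain k where "k \<in> {1..2*n}" "\<phi> = (2 * real k - 1) / (2 * real (2*n)) * pi"
      using Zset_pi_half[OF n] \<phi> by fastforce
    then show ?thesis using \<phi>(3) by auto
  qed
qed

section \<open>Smallness of the last eigenvector entry\<close>

definition transfer_form :: "real \<Rightarrow> complex \<Rightarrow> complex \<Rightarrow> real" where
  "transfer_form c a b = (cmod a)\<^sup>2 - 2 * c * Re (a * cnj b) + (cmod b)\<^sup>2"

lemma transfer_form_step: "transfer_form c b (2 * of_real c * b - a) = transfer_form c a b"
  unfolding transfer_form_def cmod_power2 by (simp add: algebra_simps power2_eq_square)

lemma transfer_form_bounds:
  shows "(1 - \<bar>c\<bar>) * ((cmod a)\<^sup>2 + (cmod b)\<^sup>2) \<le> transfer_form c a b"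
    and "transfer_form c a b \<le> (1 + \<bar>c\<bar>) * ((cmod a)\<^sup>2 + (cmod b)\<^sup>2)"
proof -
  define r where "r = Re (a * cnj b)"
  have "\<bar>r\<bar> \<le> cmod a * cmod b"
    using abs_Re_le_cmod[of "a * cnj b"] by (simp add: r_def norm_mult)
  moreover have "2 * (cmod a * cmod b) \<le> (cmod a)\<^sup>2 + (cmod b)\<^sup>2"
    using sum_squares_bound[of "cmod a" "cmod b"] by simp
  ultimately have "2 * \<bar>r\<bar> \<le> (cmod a)\<^sup>2 + (cmod b)\<^sup>2" by linarith
  then have "\<bar>c\<bar> * (2 * \<bar>r\<bar>) \<le> \<bar>c\<bar> * ((cmod a)\<^sup>2 + (cmod b)\<^sup>2)"
    by (rule mult_left_mono) simp
  then have "\<bar>2 * c * r\<bar> \<le> \<bar>c\<bar> * ((cmod a)\<^sup>2 + (cmod b)\<^sup>2)"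
    by (simp add: abs_mult ac_simps)
  then show "(1 - \<bar>c\<bar>) * ((cmod a)\<^sup>2 + (cmod b)\<^sup>2) \<le> transfer_form c a b"
    and "transfer_form c a b \<le> (1 + \<bar>c\<bar>) * ((cmod a)\<^sup>2 + (cmod b)\<^sup>2)"
    unfolding transfer_form_def r_def[symmetric] by (simp_all add: algebra_simps abs_le_iff)
qed

lemma transfer_form_conserved:
  fixes u :: "nat \<Rightarrow> complex"
  assumes rec: "\<And>j. j + 2 < N \<Longrightarrow> u (j+2) = 2 * of_real c * u (j+1) - u j"
  shows "j + 1 < N \<Longrightarrow> transfer_form c (u j) (u (j+1)) = transfer_form c (u 0) (u 1)"
proof (induction j)
  case (Suc j)
  then have "u (Suc j + 1) = 2 * of_real c * u (j+1) - u j" using rec[of j] by simp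
  then show ?case using Suc transfer_form_step[of c "u (j+1)" "u j"] by simp
qed simp

lemma sum_adjacent_pairs_le:
  fixes g :: "nat \<Rightarrow> real"
  assumes g: "\<And>j. 0 \<le> g j"
  shows "(\<Sum>j<N-1. g j + g (j+1)) \<le> 2 * (\<Sum>j<N. g j)"
proof (cases N)
  case (Suc M)
  have "(\<Sum>j<M. g j) \<le> (\<Sum>j<Suc M. g j)" using g by (intro sum_mono2) auto
  moreover have "(\<Sum>j<M. g (j+1)) \<le> (\<Sum>j<Suc M. g j)"
    using sum.lessThan_Suc_shift[of g M] g[of 0] by simp
  ultimately show ?thesis using Suc by (simp add: sum.distrib)
qed simp

lemma recurrence_last_entry_bound:
  fixes u :: "nat \<Rightarrow> complex"
  assumes N: "2 \<le> N" and c: "\<bar>c\<bar> \<le> \<rho>" "\<rho> < 1"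
    and rec: "\<And>j. j + 2 < N \<Longrightarrow> u (j+2) = 2 * of_real c * u (j+1) - u j"
    and norm: "(\<Sum>j<N. (cmod (u j))\<^sup>2) = 1"
  shows "(cmod (u (N-1)))\<^sup>2 \<le> 4 / ((real N - 1) * (1 - \<rho>))"
proof -
  define g where "g j = (cmod (u j))\<^sup>2" for j
  define T where "T = transfer_form c (u 0) (u 1)"
  have g: "0 \<le> g j" for j by (simp add: g_def)
  have conserved: "transfer_form c (u j) (u (j+1)) = T" if "j + 1 < N" for j
    using transfer_form_conserved[OF rec that] by (simp add: T_def)
  have pair_weight: "T \<le> 2 * (g j + g (j+1))" if "j + 1 < N" for j
  proof -
    have "T \<le> (1 + \<bar>c\<bar>) * (g j + g (j+1))"
      using transfer_form_bounds(2)[of c "u j" "u (j+1)"] conserved[OF that] by (simp add: g_def)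
    also have "\<dots> \<le> 2 * (g j + g (j+1))" using c g[of j] g[of "j+1"] by (intro mult_right_mono) auto
    finally show ?thesis .
  qed
  have "real (N-1) * T = (\<Sum>j<N-1. T)" by simp
  also have "\<dots> \<le> (\<Sum>j<N-1. 2 * (g j + g (j+1)))" using pair_weight by (intro sum_mono) auto
  also have "\<dots> = 2 * (\<Sum>j<N-1. g j + g (j+1))" by (simp add: sum_distrib_left)
  also have "\<dots> \<le> 2 * (2 * (\<Sum>j<N. g j))" using sum_adjacent_pairs_le[of g N] g by simp
  also have "\<dots> = 4" using norm by (simp add: g_def)
  finally have T: "real (N-1) * T \<le> 4" .
  have "(1 - \<rho>) * g (N-1) \<le> (1 - \<bar>c\<bar>) * (g (N-2) + g (N-1))"
    using c g[of "N-1"] g[of "N-2"] by (intro mult_mono) auto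
  also have "\<dots> \<le> T"
    using transfer_form_bounds(1)[of c "u (N-2)" "u (N-1)"] conserved[of "N-2"] N
    by (simp add: g_def numeral_2_eq_2 Suc_diff_Suc)
  finally have "real (N-1) * ((1 - \<rho>) * g (N-1)) \<le> 4"
    using T N by (meson order_trans mult_left_mono of_nat_0_le_iff)
  moreover have "0 < (real N - 1) * (1 - \<rho>)" using N c by simp
  ultimately show ?thesis using N by (simp add: g_def pos_le_divide_eq of_nat_diff ac_simps)
qed

lemma Mmat_eigenvector_last_entry_bound:
  fixes u :: "complex vec"
  assumes ev: "eigenvector (map_mat complex_of_real (Mmat \<theta> n)) u (complex_of_real lam)"
    and s: "0 < sin \<theta>" and lam: "\<bar>lam\<bar> \<le> 2 * sin \<theta> * \<rho>" and \<rho>: "\<rho> < 1"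
    and norm: "(\<Sum>i<2*n. (cmod (u $ i))\<^sup>2) = 1"
  shows "(cmod (u $ (2*n - 1)))\<^sup>2 \<le> 4 / ((2 * real n - 1) * (1 - \<rho>))"
proof -
  define c where "c = lam / (2 * sin \<theta>)"
  have c: "\<bar>c\<bar> \<le> \<rho>" using lam s by (simp add: c_def abs_divide pos_divide_le_eq ac_simps)
  have rec: "u $ (j+2) = 2 * of_real c * u $ (j+1) - u $ j" if "j + 2 < 2*n" for j
  proof -
    have "lam = 2 * c * sin \<theta>" using s by (simp add: c_def)
    then have "of_real (sin \<theta>) * (u $ j + u $ (j+2)) = of_real (sin \<theta>) * (2 * of_real c * u $ (j+1))"
      using Mmat_interior_row[OF ev, of "j+1"] that by (simp add: algebra_simps)
    then have "u $ j + u $ (j+2) = 2 * of_real c * u $ (j+1)" using s by simp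
    then show ?thesis by (simp add: algebra_simps)
  qed
  have "2 \<le> 2*n" using Mmat_eigenvector_dim(1)[OF ev] by simp
  from recurrence_last_entry_bound[OF this c \<rho> rec norm] show ?thesis by simp
qed

lemma Mmat_eigenvector_last_entry_small:
  assumes s: "0 < sin \<theta>" and \<epsilon>: "0 < \<epsilon>" and window: "\<bar>lam0\<bar> + \<eta> < 2 * sin \<theta>"
  obtains n0 where "\<And>n lam u. n0 \<le> n \<Longrightarrow> lam0 - \<eta> < lam \<Longrightarrow> lam < lam0 + \<eta>
    \<Longrightarrow> eigenvector (map_mat complex_of_real (Mmat \<theta> n)) u (complex_of_real lam)
    \<Longrightarrow> (\<Sum>i<2*n. (cmod (u $ i))\<^sup>2) = 1 \<Longrightarrow> cmod (u $ (2*n - 1)) < \<epsilon>"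
proof
  define \<rho> where "\<rho> = (\<bar>lam0\<bar> + \<eta>) / (2 * sin \<theta>)"
  have \<rho>: "\<rho> < 1" using window s by (simp add: \<rho>_def)
  define K where "K = 4 / ((1 - \<rho>) * \<epsilon>\<^sup>2)"
  fix n lam u
  assume n: "nat \<lceil>K\<rceil> + 1 \<le> n" and lam: "lam0 - \<eta> < lam" "lam < lam0 + \<eta>"
    and ev: "eigenvector (map_mat complex_of_real (Mmat \<theta> n)) u (complex_of_real lam)"
    and norm: "(\<Sum>i<2*n. (cmod (u $ i))\<^sup>2) = 1"
  have "\<bar>lam\<bar> \<le> 2 * sin \<theta> * \<rho>" using lam s by (simp add: \<rho>_def)
  note bound = Mmat_eigenvector_last_entry_bound[OF ev s this \<rho> norm]
  have "K < 2 * real n - 1" using n by linarith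
  moreover have P: "0 < (1 - \<rho>) * \<epsilon>\<^sup>2" using \<rho> \<epsilon> by simp
  ultimately have "4 < (2 * real n - 1) * ((1 - \<rho>) * \<epsilon>\<^sup>2)"
    by (simp add: K_def pos_divide_less_eq)
  moreover have "0 < (2 * real n - 1) * (1 - \<rho>)" using n \<rho> by simp
  ultimately have "4 / ((2 * real n - 1) * (1 - \<rho>)) < \<epsilon>\<^sup>2"
    by (simp add: pos_divide_less_eq ac_simps)
  then have "(cmod (u $ (2*n - 1)))\<^sup>2 < \<epsilon>\<^sup>2" using bound by linarith
  then show "cmod (u $ (2*n - 1)) < \<epsilon>" using \<epsilon> by (simp add: power2_less_imp_less)
qed

theorem mainTheorem1:
  fixes \<theta> :: real
  assumes "0 < \<theta>" and "\<theta> < pi"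
  shows
  \<comment> \<open>(i)\<close>
  "(\<forall>n::nat. n \<ge> 1 \<longrightarrow> (\<forall>\<phi>. 0 \<le> \<phi> \<and> \<phi> \<le> pi \<and> \<phi> \<in> fdom (2*n) \<longrightarrow>
       fn (2*n) \<phi> = fn (2*n) (pi - \<phi>) \<and> fn (2*n) \<phi> = fn (2*n) (pi + \<phi>)))
   \<and>
  \<comment> \<open>(ii)\<close>
   (\<exists>N. \<forall>n\<ge>N.
       monot_on {0 <..< pi / (2 * (2 * real n + 1))} (fn (2*n)) \<and>
       monot_on {pi - pi / (2 * (2 * real n + 1)) <..< pi} (fn (2*n)))
   \<and>
  \<comment> \<open>(iii)\<close>
   (\<exists>N. \<forall>n\<ge>N. \<forall>k::nat. 1 \<le> k \<and> k \<le> 2*n - 1 \<and> k \<noteq> n \<longrightarrow>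
       monot_on {pi / (2 * (2 * real n + 1)) ..< pi / (2 * real n + 1)} (fn (2*n)) \<and>
       monot_on (Iint (2*n) k) (fn (2*n)) \<and>
       monot_on {2 * real n * pi / (2 * real n + 1) <.. pi - pi / (2 * (2 * real n + 1))} (fn (2*n)))
   \<and>
  \<comment> \<open>(iv)\<close>
   (\<theta> \<noteq> pi / 2 \<longrightarrow> (\<exists>N. \<forall>n\<ge>N.
       finite (Zset \<theta> (2*n) \<inter> Iint (2*n) 0) \<and> card (Zset \<theta> (2*n) \<inter> Iint (2*n) 0) \<le> 3 \<and>
       finite (Zset \<theta> (2*n) \<inter> Iint (2*n) (2*n)) \<and> card (Zset \<theta> (2*n) \<inter> Iint (2*n) (2*n)) \<le> 3 \<and>
       Zset \<theta> (2*n) \<inter> Iint (2*n) n = {} \<and>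
       {0, pi} \<subseteq> Zset \<theta> (2*n) \<and>
       (\<forall>k::nat. 1 \<le> k \<and> k \<le> 2*n - 1 \<and> k \<noteq> n \<longrightarrow> card (Zset \<theta> (2*n) \<inter> Iint (2*n) k) = 1)))
   \<and>
  \<comment> \<open>(v)\<close>
   (\<theta> = pi / 2 \<longrightarrow> (\<forall>n::nat. n \<ge> 1 \<longrightarrow>
       Zset \<theta> (2*n) \<inter> {0..pi} \<subseteq>
         {0, pi} \<union> {(2 * real j - 1) / (4 * real n) * pi | j. j \<in> {1..2*n}}))
   \<and>
  \<comment> \<open>(vi)\<close>
   (\<theta> \<noteq> pi / 2 \<longrightarrow> (\<exists>N. \<forall>n\<ge>N.
       finite (spec (Mmat \<theta> n) \<inter> cosimg \<theta> (Iint (2*n) 0)) \<and>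
       card (spec (Mmat \<theta> n) \<inter> cosimg \<theta> (Iint (2*n) 0)) \<le> 3 \<and>
       finite (spec (Mmat \<theta> n) \<inter> cosimg \<theta> (Iint (2*n) (2*n))) \<and>
       card (spec (Mmat \<theta> n) \<inter> cosimg \<theta> (Iint (2*n) (2*n))) \<le> 3 \<and>
       spec (Mmat \<theta> n) \<inter> cosimg \<theta> (Iint (2*n) n) = {} \<and>
       (\<forall>k::nat. 1 \<le> k \<and> k \<le> 2*n - 1 \<and> k \<noteq> n \<longrightarrow>
          finite (spec (Mmat \<theta> n) \<inter> cosimg \<theta> (Iint (2*n) k)) \<and>
          card (spec (Mmat \<theta> n) \<inter> cosimg \<theta> (Iint (2*n) k)) \<le> 1)))
   \<and>
  \<comment> \<open>(vii)\<close>
   (\<theta> = pi / 2 \<longrightarrow> (\<forall>n::nat. n \<ge> 1 \<longrightarrow>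
       spec (Mmat \<theta> n) \<subseteq> {-2, 2} \<union> {2 * cos ((2 * real k - 1) / (4 * real n) * pi) | k. k \<in> {1..2*n}}))
   \<and>
  \<comment> \<open>(viii)\<close>
   (\<forall>\<epsilon> lam0 \<eta>. \<epsilon> > 0 \<and> - 2 * sin \<theta> < lam0 \<and> lam0 < 2 * sin \<theta> \<and> \<eta> > 0 \<and> \<bar>lam0\<bar> + \<eta> < 2 * sin \<theta> \<longrightarrow>
      (\<exists>n0::nat. \<forall>n\<ge>n0. \<forall>(lam::real) (u::complex vec).
         eigenvalue (Mmat \<theta> n) lam \<and> lam0 - \<eta> < lam \<and> lam < lam0 + \<eta> \<and>
         eigenvector (map_mat complex_of_real (Mmat \<theta> n)) u (complex_of_real lam) \<and>
         (\<Sum>i<2*n. (cmod (u $ i))^2) = 1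
         \<longrightarrow> cmod (u $ (2*n - 1)) < \<epsilon>))"
proof -
  have s: "0 < sin \<theta>" using assms by (rule sin_gt_zero)
  have a: "1 + cos \<theta> \<noteq> 0" using one_plus_cos_pos[OF assms] by simp
  (* On the outer intervals the sharper bound 1 holds, which gives the bound 3 of the claim. *)
  have edges: "finite (Zset \<theta> (2*n) \<inter> Iint (2*n) k) \<and> card (Zset \<theta> (2*n) \<inter> Iint (2*n) k) \<le> 3
      \<and> finite (spec (Mmat \<theta> n) \<inter> cosimg \<theta> (Iint (2*n) k))
      \<and> card (spec (Mmat \<theta> n) \<inter> cosimg \<theta> (Iint (2*n) k)) \<le> 3"
    if "1 \<le> n" "k = 0 \<or> k = 2*n" for n k
    using Zset_Iint_card_le_1[OF a that(1), of k] spec_Mmat_cosimg_card_le_1[of \<theta> n k] s a that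
    by auto
  have four: "2 * real (2*n) = 4 * real n" for n by simp
  show ?thesis
    apply (intro conjI impI)
    subgoal by (simp add: fn_reflect)
    subgoal
      using fn_monot_on_Iint[OF _ _ _ end_intervals_subset_Iint(1)]
        fn_monot_on_Iint[OF _ _ _ end_intervals_subset_Iint(3)]
      by (intro exI[of _ 1]) auto
    subgoal
      using fn_monot_on_Iint[OF _ _ _ end_intervals_subset_Iint(2)]
        fn_monot_on_Iint[OF _ _ _ end_intervals_subset_Iint(4)] fn_monot_on_Iint[OF _ _ _ subset_refl]
      by (intro exI[of _ 1]) auto
    subgoal using edges Zset_Iint_middle_empty zero_pi_in_Zset Zset_Iint_card_eq_1 s a
      by (intro exI[of _ 1]) auto
    subgoal premises \<theta>
      unfolding \<theta>
      apply (intro allI impI)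
      subgoal for n using Zset_pi_half[of "2*n"] by (simp add: four)
      done
    subgoal using edges spec_Mmat_cosimg_middle_empty spec_Mmat_cosimg_card_le_1 s a
      by (intro exI[of _ 1]) auto
    subgoal premises \<theta>
      unfolding \<theta>
      apply (intro allI impI)
      subgoal for n using spec_Mmat_pi_half[of n] by (simp add: four)
      done
    subgoal using Mmat_eigenvector_last_entry_small[OF s] by metis
    done
qed

end
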